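(* Let $c\in\mathbb{R}$ with $0<c<1$ and let $s\in\mathbb{C}$, $s\neq0$. Then $$\zeta(s+1)=\frac{\pi}{2s}\int_{-\infty}^{\infty}\frac{(c+it)^{-s}}{\sin^2\big(\pi(c+it)\big)}\,dt .$$
   Context: $\zeta$ is the Riemann zeta function (meromorphically continued). Powers $(c+it)^{-s}$ use the principal branch. *)

theory Defs
  imports "HOL-Complex_Analysis.Complex_Analysis"
begin

text \<open>The Riemann zeta function: the (unique) holomorphic function on the
  plane minus 1 that agrees with the Dirichlet series sum over n of n^(-s) on Re s > 1.
  Its value at the pole 1 is irrelevant here.\<close>

definition zeta :: "complex \<Rightarrow> complex" where
  "zeta = (THE f. f holomorphic_on (- {1}) \<and>
     (\<forall>s. 1 < Re s \<longrightarrow> f s = (\<Sum>n. 1 / (of_nat (Suc n)) powr s)) \<and> f 1 = 0)"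

end

theory Submission
  imports Defs "HOL-Real_Asymp.Real_Asymp"
begin

text \<open>Write \<open>h(z) = z powr (-s) / sin(\<pi> z)\<^sup>2\<close>. Since
  \<open>(- z powr (-s) cot(\<pi> z) / \<pi>)' = h(z) + (s / \<pi>) z powr (-s-1) cot(\<pi> z)\<close>,
  Cauchy's theorem on the rectangle with corners \<open>c - i N\<close> and \<open>N + 1/2 + i N\<close> turns
  the integral of \<open>h\<close> over its boundary into \<open>-s/\<pi>\<close> times that of
  \<open>z powr (-s-1) cot(\<pi> z)\<close>, which by the residue theorem is \<open>2 i\<close> times the sum of
  \<open>n powr (-s-1)\<close> over \<open>1 \<le> n \<le> N\<close>. Because \<open>\<bar>sin(\<pi> z)\<bar>\<^sup>2\<close> grows like
  \<open>exp(2\<pi>\<bar>Im z\<bar>)\<close> and equals \<open>cosh(\<pi> Im z)\<^sup>2\<close> on the lines \<open>Re z = N + 1/2\<close>,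
  the other three sides vanish as \<open>N \<rightarrow> \<infinity>\<close> when \<open>Re s > 0\<close>, which gives the
  formula in that half plane. The integral along \<open>Re z = c\<close> converges locally uniformly
  in \<open>s\<close>, hence is entire, and the formula extends to all \<open>s \<noteq> 0\<close> by uniqueness of
  analytic continuation.\<close>

lemma sinh_squared_eq: "(sinh y)^2 = (exp (2*y) + exp (-2*y) - 2) / (4::real)"
  by (simp add: sinh_def power2_eq_square field_simps flip: exp_add)

lemma norm_sin_Complex_squared:
  "norm (sin (Complex x y))^2 = (sin x)^2 + (sinh y)^2"
proof -
  have "norm (sin (Complex x y))^2 = (exp (2*y) + exp (-2*y) - 2 * cos (2*x)) / 4"
    using norm_sin_squared[of "Complex x y"] by (simp add: exp_minus)
  then show ?thesis
    using cos_double_sin[of x] by (simp add: sinh_squared_eq field_simps)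
qed

lemma sinh_squared_ge: "(exp (2 * \<bar>y\<bar>) - 2) / 4 \<le> (sinh (y::real))^2"
  by (cases "y \<ge> 0") (auto simp: sinh_squared_eq)

lemma cosh_squared_ge: "exp (2 * \<bar>y\<bar>) / 4 \<le> (cosh (y::real))^2"
proof -
  have "(cosh y)^2 = (exp (2*y) + exp (-2*y) + 2) / 4"
    by (simp add: cosh_def power2_eq_square field_simps flip: exp_add)
  then show ?thesis
    using exp_gt_zero[of "2*y"] exp_gt_zero[of "-2*y"] by (cases "y \<ge> 0") auto
qed

lemma norm_sin_Complex_ge_sinh: "(exp (2 * \<bar>y\<bar>) - 2) / 4 \<le> norm (sin (Complex x y))^2"
  using sinh_squared_ge[of y] by (simp add: norm_sin_Complex_squared add_increasing)

lemma norm_sin_Complex_ge_sin: "(sin x)^2 * exp (2 * \<bar>y\<bar>) / 4 \<le> norm (sin (Complex x y))^2"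
proof -
  have "(sin x)^2 * exp (2 * \<bar>y\<bar>) / 4 \<le> (sin x)^2 * (cosh y)^2"
    using mult_left_mono[OF cosh_squared_ge[of y], of "(sin x)^2"] by simp
  also have "\<dots> = (sin x)^2 + (sin x)^2 * (sinh y)^2"
    by (simp add: cosh_square_eq algebra_simps)
  also have "\<dots> \<le> (sin x)^2 + (sinh y)^2"
    by (simp add: mult_left_le_one_le abs_square_le_1 abs_sin_le_one)
  finally show ?thesis by (simp add: norm_sin_Complex_squared)
qed

lemma exp_neg_pi_abs_le: "exp (- pi * \<bar>t\<bar>) \<le> 1 / (1 + t^2)"
proof -
  have "1 + t^2 \<le> 1 + pi * \<bar>t\<bar> + (pi * \<bar>t\<bar>)^2 / 2"
  proof -
    have "2 * t^2 \<le> pi^2 * t^2"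
      using mult_strict_mono[of 3 pi 3 pi] pi_gt3 by (intro mult_right_mono) (auto simp: power2_eq_square)
    then have "t^2 \<le> (pi * \<bar>t\<bar>)^2 / 2" by (simp add: power_mult_distrib)
    then show ?thesis by (simp add: add_increasing)
  qed
  also have "\<dots> \<le> exp (pi * \<bar>t\<bar>)"
    by (rule exp_lower_Taylor_quadratic) simp
  finally have "1 + t^2 \<le> exp (pi * \<bar>t\<bar>)" .
  then show ?thesis
    by (simp add: exp_minus inverse_eq_divide frac_le add_pos_nonneg)
qed

lemma norm_powr_le: "norm (z powr w) \<le> norm z powr Re w * exp (\<bar>Im w\<bar> * pi)"
proof -
  have "\<bar>Im w * Arg z\<bar> \<le> \<bar>Im w\<bar> * pi"
    using Arg_le_pi mpi_less_Arg[of z] by (simp add: abs_mult abs_le_iff mult_left_mono)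
  then show ?thesis by (simp add: norm_powr_complex mult_left_mono)
qed

lemma sin_pi_gt_0: "0 < x \<Longrightarrow> x < 1 \<Longrightarrow> 0 < sin (pi * x)"
  by (intro sin_gt_zero) simp_all

lemma sin_pi_eq_0_imp_Ints:
  fixes z :: complex
  assumes "sin (of_real pi * z) = 0"
  shows "z \<in> \<int>"
proof -
  obtain n :: int where "of_real pi * z = of_real (of_int n * pi)"
    using assms unfolding sin_eq_0 by blast
  then have "z = of_int n"
    by (simp add: field_simps)
  then show ?thesis
    by simp
qed

lemma cos_pi_of_nat: "cos (of_real pi * of_nat n :: complex) = (- 1) ^ n"
proof -
  have "cos (of_real pi * of_nat n :: complex) = of_real (cos (real n * pi))"
    by (simp add: cos_of_real[symmetric] mult.commute)
  then show ?thesis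
    by (simp add: cos_npi)
qed

lemma sin_pi_of_nat: "sin (of_real pi * of_nat n :: complex) = 0"
proof -
  have "sin (of_real pi * of_nat n :: complex) = of_real (sin (real n * pi))"
    by (simp add: sin_of_real[symmetric] mult.commute)
  then show ?thesis
    by simp
qed

lemma half_integer_notin_Ints: "real N + 1 / 2 \<notin> \<int>"
proof
  assume "real N + 1 / 2 \<in> \<int>"
  then obtain m :: int where "real N + 1 / 2 = of_int m"
    by (auto elim: Ints_cases)
  then have "of_int (2 * m) = (of_int (2 * int N + 1) :: real)"
    by simp
  then show False
    by (subst (asm) of_int_eq_iff) presburger
qed

lemma between_0_1_notin_Ints: "0 < x \<Longrightarrow> x < 1 \<Longrightarrow> (x :: real) \<notin> \<int>"
  by (auto elim: Ints_cases)

lemma sin_pi_half_integer_squared: "(sin (pi * (real N + 1 / 2)))^2 = 1"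
proof -
  have "sin (pi * (real N + 1 / 2)) = cos (real N * pi)"
    by (simp add: algebra_simps sin_add)
  then show ?thesis
    by (simp add: cos_npi power2_eq_square power_mult_distrib[symmetric])
qed

lemma norm_powr_neg_le_Re:
  assumes "0 < c" "c \<le> Re z" "0 < Re s"
  shows "norm (z powr (- s)) \<le> c powr (- Re s) * exp (\<bar>Im s\<bar> * pi)"
proof -
  have "norm z powr (- Re s) \<le> c powr (- Re s)"
    using assms abs_Re_le_cmod[of z] by (intro powr_mono2') auto
  then show ?thesis
    using norm_powr_le[of z "- s"] by (simp add: order_trans mult_right_mono)
qed

section \<open>Integrals dominated by \<open>1 / (1 + t\<^sup>2)\<close>\<close>

lemma has_integral_inverse_1_plus_square_interval:
  "a \<le> b \<Longrightarrow> ((\<lambda>t::real. 1 / (1 + t^2)) has_integral (arctan b - arctan a)) {a..b}"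
  by (intro fundamental_theorem_of_calculus)
     (auto intro!: derivative_eq_intros simp flip: has_real_derivative_iff_has_vector_derivative
           simp: divide_simps)

lemma has_integral_inverse_1_plus_square_symmetric:
  "0 \<le> T \<Longrightarrow> ((\<lambda>t::real. 1 / (1 + t^2)) has_integral 2 * arctan T) {-T..T}"
  using has_integral_inverse_1_plus_square_interval[of "-T" T] by (simp add: arctan_minus)

lemma has_integral_inverse_1_plus_square: "((\<lambda>t::real. 1 / (1 + t^2)) has_integral pi) UNIV"
proof (rule has_integral_monotone_convergence_increasing)
  let ?f = "\<lambda>k::nat. \<lambda>t::real. if t \<in> {-real k..real k} then 1 / (1 + t^2) else 0"
  show "(?f k has_integral 2 * arctan (real k)) UNIV" for k
    using has_integral_inverse_1_plus_square_symmetric[of "real k"]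
    by (subst has_integral_restrict_UNIV) simp
  show "?f k t \<le> ?f (Suc k) t" for k t
    by auto
  show "(\<lambda>k. ?f k t) \<longlonglongrightarrow> 1 / (1 + t^2)" for t
  proof (rule tendsto_eventually)
    obtain n :: nat where "\<bar>t\<bar> \<le> real n" using real_arch_simple by blast
    then show "\<forall>\<^sub>F k in sequentially. ?f k t = 1 / (1 + t^2)"
      unfolding eventually_sequentially by (intro exI[of _ n]) auto
  qed
  have "(\<lambda>k. 2 * arctan (real k)) \<longlonglongrightarrow> 2 * (pi / 2)"
    by (intro tendsto_mult tendsto_const filterlim_compose[OF tendsto_arctan_at_top filterlim_real_sequentially])
  then show "(\<lambda>k. 2 * arctan (real k)) \<longlonglongrightarrow> pi" by simp
qed

lemma integrable_on_UNIV_Cauchy_bound: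
  fixes f :: "real \<Rightarrow> 'a::banach"
  assumes "continuous_on UNIV f" and "\<And>t. norm (f t) \<le> K / (1 + t^2)"
  shows "f integrable_on UNIV"
proof (rule integrable_on_all_intervals_integrable_bound)
  show "(\<lambda>t. if t \<in> UNIV then f t else 0) integrable_on cbox a b" for a b
    using integrable_continuous[OF continuous_on_subset[OF assms(1)]] by simp
  show "(\<lambda>t. K / (1 + t^2)) integrable_on UNIV"
    using has_integral_mult_right[OF has_integral_inverse_1_plus_square, of K] by (auto simp: integrable_on_def)
qed (use assms(2) in auto)

lemma norm_integral_UNIV_minus_symmetric_le:
  fixes f :: "real \<Rightarrow> 'a::banach"
  assumes "continuous_on UNIV f" and "\<And>t. norm (f t) \<le> K / (1 + t^2)" and "0 \<le> T"
  shows "norm (integral UNIV f - integral {-T..T} f) \<le> K * (pi - 2 * arctan T)"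
proof -
  let ?g = "\<lambda>t::real. K / (1 + t^2)"
  let ?cut = "\<lambda>h t. if t \<in> {-T..T} then h t else 0"
  have f: "f integrable_on UNIV"
    by (rule integrable_on_UNIV_Cauchy_bound[OF assms(1,2)])
  have f_cut: "?cut f integrable_on UNIV"
    using integrable_continuous_real[OF continuous_on_subset[OF assms(1)]]
    by (subst integrable_restrict_UNIV) simp
  have g: "(?g has_integral K * pi) UNIV"
    using has_integral_mult_right[OF has_integral_inverse_1_plus_square, of K] by simp
  have g_cut: "(?cut ?g has_integral K * (2 * arctan T)) UNIV"
    using has_integral_mult_right[OF has_integral_inverse_1_plus_square_symmetric[OF assms(3)], of K]
    by (subst has_integral_restrict_UNIV) simp
  have "integral {-T..T} f = integral UNIV (?cut f)"
    by (rule integral_restrict_UNIV[symmetric])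
  then have "norm (integral UNIV f - integral {-T..T} f) = norm (integral UNIV (\<lambda>t. f t - ?cut f t))"
    using f f_cut by (simp only: integral_diff)
  also have "\<dots> \<le> integral UNIV (\<lambda>t. ?g t - ?cut ?g t)"
    using f f_cut g g_cut assms(2)
    by (intro integral_norm_bound_integral integrable_diff) (auto simp: integrable_on_def)
  also have "\<dots> = K * (pi - 2 * arctan T)"
    using integral_unique[OF has_integral_diff[OF g g_cut]] by (simp add: algebra_simps)
  finally show ?thesis .
qed

lemma tendsto_integral_symmetric_UNIV:
  fixes f :: "real \<Rightarrow> 'a::banach"
  assumes "continuous_on UNIV f" and "\<And>t. norm (f t) \<le> K / (1 + t^2)"
  shows "((\<lambda>T. integral {-T..T} f) \<longlongrightarrow> integral UNIV f) at_top"
proof (rule LIM_zero_cancel, rule Lim_null_comparison)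
  show "\<forall>\<^sub>F T in at_top. norm (integral {-T..T} f - integral UNIV f) \<le> K * (pi - 2 * arctan T)"
    using eventually_ge_at_top[of 0]
    by (rule eventually_mono) (use norm_integral_UNIV_minus_symmetric_le[OF assms] in \<open>simp add: norm_minus_commute\<close>)
  have "((\<lambda>T. K * (pi - 2 * arctan T)) \<longlongrightarrow> K * (pi - 2 * (pi / 2))) at_top"
    by (intro tendsto_intros tendsto_arctan_at_top)
  then show "((\<lambda>T. K * (pi - 2 * arctan T)) \<longlongrightarrow> 0) at_top" by simp
qed

lemma holomorphic_on_integral_UNIV:
  fixes F F' :: "complex \<Rightarrow> real \<Rightarrow> complex"
  assumes deriv: "\<And>s t. ((\<lambda>s. F s t) has_field_derivative F' s t) (at s)"
    and cont: "\<And>s. continuous_on UNIV (F s)"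
    and cont': "continuous_on UNIV (\<lambda>(s, t). F' s t)"
    and bound: "\<And>s0. \<exists>K. \<forall>s\<in>cball s0 1. \<forall>t. norm (F s t) \<le> K / (1 + t^2)"
  shows "(\<lambda>s. integral UNIV (F s)) holomorphic_on UNIV"
proof -
  have "(\<lambda>s. integral UNIV (F s)) holomorphic_on ball s0 1" for s0
  proof -
    obtain K where K: "\<And>s t. s \<in> cball s0 1 \<Longrightarrow> norm (F s t) \<le> K / (1 + t^2)"
      using bound[of s0] by blast
    define G where "G = (\<lambda>k::nat. \<lambda>s. integral (cbox (-real k) (real k)) (F s))"
    have "G k holomorphic_on UNIV" for k
      unfolding G_def
    proof (rule leibniz_rule_holomorphic)
      show "continuous_on (UNIV \<times> cbox (- real k) (real k)) (\<lambda>(s, t). F' s t)"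
        using continuous_on_subset[OF cont'] by blast
    qed (auto intro: deriv integrable_continuous_real continuous_on_subset[OF cont])
    then have "\<forall>\<^sub>F k in sequentially. continuous_on (cball s0 1) (G k) \<and> G k holomorphic_on ball s0 1"
      by (intro always_eventually allI conjI)
         (auto intro: holomorphic_on_imp_continuous_on holomorphic_on_subset)
    moreover have "uniform_limit (cball s0 1) G (\<lambda>s. integral UNIV (F s)) sequentially"
    proof (rule uniform_limitI)
      fix e :: real assume "e > 0"
      have "(\<lambda>k. K * (pi - 2 * arctan (real k))) \<longlonglongrightarrow> K * (pi - 2 * (pi / 2))"
        by (intro tendsto_intros filterlim_compose[OF tendsto_arctan_at_top filterlim_real_sequentially])
      then have "\<forall>\<^sub>F k in sequentially. K * (pi - 2 * arctan (real k)) < e"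
        using \<open>e > 0\<close> by (auto dest: order_tendstoD)
      then show "\<forall>\<^sub>F k in sequentially. \<forall>s\<in>cball s0 1. dist (G k s) (integral UNIV (F s)) < e"
      proof (rule eventually_mono, intro ballI)
        fix k s assume "K * (pi - 2 * arctan (real k)) < e" and "s \<in> cball s0 1"
        then show "dist (G k s) (integral UNIV (F s)) < e"
          using norm_integral_UNIV_minus_symmetric_le[OF cont, of s K "real k"] K
          by (simp add: G_def dist_norm norm_minus_commute)
      qed
    qed
    ultimately show ?thesis
      by (rule holomorphic_uniform_limit) auto
  qed
  then show ?thesis
    by (meson centre_in_ball holomorphic_on_imp_differentiable_at holomorphic_on_def
        open_ball zero_less_one field_differentiable_at_within)
qed

section \<open>The integrand on vertical lines\<close>

definition csc2_powr :: "complex \<Rightarrow> complex \<Rightarrow> complex" where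
  "csc2_powr s z = z powr (- s) / (sin (of_real pi * z))^2"

definition vertical_integral :: "real \<Rightarrow> complex \<Rightarrow> complex" where
  "vertical_integral c s = integral UNIV (\<lambda>t. csc2_powr s (Complex c t))"

lemma norm_sin_pi_Complex_ge:
  "(sin (pi * x))^2 * exp (2 * pi * \<bar>t\<bar>) / 4 \<le> norm (sin (of_real pi * Complex x t))^2"
proof -
  have "of_real pi * Complex x t = Complex (pi * x) (pi * t)"
    by (simp add: complex_eq_iff)
  then show ?thesis
    using norm_sin_Complex_ge_sin[of "pi * x" "pi * t"] by (simp add: abs_mult mult.assoc)
qed

lemma sin_pi_Complex_nonzero:
  assumes "sin (pi * x) \<noteq> 0"
  shows "sin (of_real pi * Complex x t) \<noteq> 0"
proof -
  have "0 < (sin (pi * x))^2 * exp (2 * pi * \<bar>t\<bar>) / 4"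
    using assms by simp
  then show ?thesis
    using norm_sin_pi_Complex_ge[of x t] by auto
qed

lemma abs_ln_norm_Complex_le:
  assumes "0 < c" "c \<le> 1"
  shows "\<bar>ln (norm (Complex c t))\<bar> \<le> - ln c + ln (1 + \<bar>t\<bar>)"
proof -
  have "c \<le> norm (Complex c t)" and "norm (Complex c t) \<le> 1 + \<bar>t\<bar>"
    using abs_Re_le_cmod[of "Complex c t"] cmod_le[of "Complex c t"] assms by auto
  then have "ln c \<le> ln (norm (Complex c t))" and "ln (norm (Complex c t)) \<le> ln (1 + \<bar>t\<bar>)"
    using assms by (auto intro!: ln_mono)
  moreover have "ln c \<le> 0" and "0 \<le> ln (1 + \<bar>t\<bar>)"
    using assms by auto
  ultimately show ?thesis
    by linarith
qed

lemma ln_1_plus_le_linear: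
  assumes "0 < \<delta>" "\<delta> \<le> 1" "0 \<le> x"
  shows "ln (1 + x :: real) \<le> \<delta> * x - ln \<delta>"
proof -
  have "ln \<delta> + ln (1 + x) = ln (\<delta> * (1 + x))"
    using assms ln_mult[of \<delta> "1 + x"] by simp
  also have "\<dots> \<le> \<delta> * (1 + x) - 1"
    using assms by (intro ln_le_minus_one) auto
  finally show ?thesis
    using assms by (simp add: algebra_simps)
qed

text \<open>The modulus of \<open>Complex c t\<close> contributes at most a power \<open>(1 + \<bar>t\<bar>) powr R\<close>,
  which \<open>ln (1 + x) \<le> \<delta> x - ln \<delta>\<close> absorbs into \<open>exp (pi * \<bar>t\<bar>)\<close>; the argument
  contributes at most \<open>exp (pi * R)\<close>.\<close>

lemma norm_powr_Complex_le_exp: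
  assumes "0 < c" "c \<le> 1"
  obtains B where "\<And>s t. norm s \<le> R \<Longrightarrow> norm (Complex c t powr (- s)) \<le> B * exp (pi * \<bar>t\<bar>)"
proof
  define A where "A = max R pi"
  define \<delta> where "\<delta> = pi / A"
  have A: "R \<le> A" "pi \<le> A"
    by (simp_all add: A_def)
  then have "0 < A"
    using pi_gt_zero by linarith
  then have \<delta>: "0 < \<delta>" "\<delta> \<le> 1" "A * \<delta> = pi"
    using A by (simp_all add: \<delta>_def)
  fix s :: complex and t :: real
  assume s: "norm s \<le> R"
  define \<rho> where "\<rho> = norm (Complex c t)"
  have "0 < \<rho>"
    using assms by (simp add: \<rho>_def complex_eq_iff)
  have "- Re s * ln \<rho> \<le> A * \<bar>ln \<rho>\<bar>"
    using abs_Re_le_cmod[of s] s A by (intro order.trans[OF _ mult_right_mono[of "\<bar>Re s\<bar>" A]])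
      (auto simp flip: abs_mult)
  also have "\<dots> \<le> A * (- ln c + (\<delta> * \<bar>t\<bar> - ln \<delta>))"
    using abs_ln_norm_Complex_le[OF assms, of t] ln_1_plus_le_linear[OF \<delta>(1,2), of "\<bar>t\<bar>"] \<open>0 < A\<close>
    by (intro mult_left_mono) (auto simp: \<rho>_def)
  also have "\<dots> = A * (- ln c - ln \<delta>) + pi * \<bar>t\<bar>"
    using \<delta>(3) by (simp add: algebra_simps)
  finally have modulus: "- Re s * ln \<rho> \<le> A * (- ln c - ln \<delta>) + pi * \<bar>t\<bar>" .
  have argument: "\<bar>Im s\<bar> * pi \<le> A * pi"
    using abs_Im_le_cmod[of s] s A by (intro mult_right_mono) auto
  have "norm (Complex c t powr (- s)) \<le> \<rho> powr (- Re s) * exp (\<bar>Im s\<bar> * pi)"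
    using norm_powr_le[of "Complex c t" "- s"] by (simp add: \<rho>_def)
  also have "\<dots> = exp (- Re s * ln \<rho> + \<bar>Im s\<bar> * pi)"
    using \<open>0 < \<rho>\<close> by (simp add: powr_def mult_exp_exp)
  also have "\<dots> \<le> exp (A * (- ln c - ln \<delta>) + A * pi + pi * \<bar>t\<bar>)"
    using modulus argument by (intro exp_mono) linarith
  also have "\<dots> = exp (A * (- ln c - ln \<delta>) + A * pi) * exp (pi * \<bar>t\<bar>)"
    by (simp add: exp_add)
  finally show "norm (Complex c t powr (- s)) \<le> exp (A * (- ln c - ln \<delta>) + A * pi) * exp (pi * \<bar>t\<bar>)" .
qed

lemma norm_csc2_powr_Complex_le:
  assumes "0 < c" "c < 1"
  obtains K where "\<And>s t. norm s \<le> R \<Longrightarrow> norm (csc2_powr s (Complex c t)) \<le> K / (1 + t^2)"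
proof -
  obtain B where B: "\<And>s t. norm s \<le> R \<Longrightarrow> norm (Complex c t powr (- s)) \<le> B * exp (pi * \<bar>t\<bar>)"
    using norm_powr_Complex_le_exp[of c R] assms by auto
  define m where "m = (sin (pi * c))^2"
  have "0 < m"
    using sin_pi_gt_0[OF assms] by (simp add: m_def)
  show ?thesis
  proof
    fix s :: complex and t :: real
    assume "norm s \<le> R"
    have "norm (csc2_powr s (Complex c t))
        = norm (Complex c t powr (- s)) / norm (sin (of_real pi * Complex c t))^2"
      by (simp add: csc2_powr_def norm_divide norm_power)
    also have "\<dots> \<le> B * exp (pi * \<bar>t\<bar>) / (m * exp (2 * pi * \<bar>t\<bar>) / 4)"
      using B[OF \<open>norm s \<le> R\<close>] order.trans[OF norm_ge_zero B[OF \<open>norm s \<le> R\<close>]]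
        norm_sin_pi_Complex_ge[of c t] \<open>0 < m\<close>
      by (intro frac_le) (auto simp: m_def)
    also have "\<dots> = 4 * B / m * exp (- pi * \<bar>t\<bar>)"
      using \<open>0 < m\<close> by (simp add: field_simps flip: exp_add)
    also have "\<dots> \<le> 4 * B / m * (1 / (1 + t^2))"
      using exp_neg_pi_abs_le[of t] \<open>0 < m\<close> order.trans[OF norm_ge_zero B[OF \<open>norm s \<le> R\<close>, of t]]
      by (intro mult_left_mono) (auto simp: zero_le_mult_iff)
    finally show "norm (csc2_powr s (Complex c t)) \<le> 4 * B / m / (1 + t^2)" by simp
  qed
qed

lemma has_field_derivative_csc2_powr_exponent:
  assumes "z \<noteq> 0"
  shows "((\<lambda>s. csc2_powr s z) has_field_derivative - Ln z * csc2_powr s z) (at s)"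
proof -
  have "((\<lambda>s. z powr (- s)) has_field_derivative Ln z * z powr (- s) * (- 1)) (at s)"
    by (rule DERIV_chain2[OF has_field_derivative_powr_right[OF assms]]) (auto intro!: derivative_eq_intros)
  from DERIV_cdivide[OF this, of "(sin (of_real pi * z))^2"] show ?thesis
    unfolding csc2_powr_def by simp
qed

lemma continuous_on_csc2_powr_vertical:
  assumes "0 < c" "sin (pi * c) \<noteq> 0"
  shows "continuous_on UNIV (\<lambda>(s, t). csc2_powr s (Complex c t))"
    and "continuous_on UNIV (\<lambda>(s, t). - Ln (Complex c t) * csc2_powr s (Complex c t))"
proof -
  have line: "continuous_on UNIV (\<lambda>p::complex \<times> real. Complex c (snd p))"
    unfolding Complex_eq by (intro continuous_intros)
  have "continuous_on UNIV (\<lambda>p::complex \<times> real. csc2_powr (fst p) (Complex c (snd p)))"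
    unfolding csc2_powr_def
    using assms sin_pi_Complex_nonzero[OF assms(2)]
    by (intro continuous_intros line) (auto simp: Complex_eq_0)
  moreover have "continuous_on UNIV (\<lambda>p::complex \<times> real. Ln (Complex c (snd p)))"
    using assms by (intro continuous_intros line) (auto simp: complex_nonpos_Reals_iff)
  ultimately show "continuous_on UNIV (\<lambda>(s, t). csc2_powr s (Complex c t))"
    and "continuous_on UNIV (\<lambda>(s, t). - Ln (Complex c t) * csc2_powr s (Complex c t))"
    by (simp_all add: case_prod_beta' continuous_intros)
qed

lemma continuous_on_csc2_powr_vertical_line:
  assumes "0 < c" "sin (pi * c) \<noteq> 0"
  shows "continuous_on A (\<lambda>t. csc2_powr s (Complex c t))"
proof -
  have "continuous_on A (\<lambda>t. (s, t))"
    by (intro continuous_on_Pair continuous_on_const continuous_on_id)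
  from continuous_on_compose2[OF continuous_on_csc2_powr_vertical(1)[OF assms] this] show ?thesis
    by simp
qed

lemma vertical_integral_improper:
  assumes "0 < c" "c < 1"
  shows "(\<lambda>t. csc2_powr s (Complex c t)) integrable_on UNIV"
    and "((\<lambda>T. integral {-T..T} (\<lambda>t. csc2_powr s (Complex c t))) \<longlongrightarrow> vertical_integral c s) at_top"
proof -
  obtain K where bound: "\<And>t. norm (csc2_powr s (Complex c t)) \<le> K / (1 + t^2)"
    using norm_csc2_powr_Complex_le[OF assms, of "norm s"] by (metis order.refl)
  have cont: "continuous_on UNIV (\<lambda>t. csc2_powr s (Complex c t))"
    using assms sin_pi_gt_0[OF assms] by (intro continuous_on_csc2_powr_vertical_line) simp_all
  show "(\<lambda>t. csc2_powr s (Complex c t)) integrable_on UNIV"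
    by (rule integrable_on_UNIV_Cauchy_bound[OF cont bound])
  show "((\<lambda>T. integral {-T..T} (\<lambda>t. csc2_powr s (Complex c t))) \<longlongrightarrow> vertical_integral c s) at_top"
    unfolding vertical_integral_def by (rule tendsto_integral_symmetric_UNIV[OF cont bound])
qed

lemma holomorphic_vertical_integral:
  assumes "0 < c" "c < 1"
  shows "vertical_integral c holomorphic_on UNIV"
  unfolding vertical_integral_def[abs_def]
proof (rule holomorphic_on_integral_UNIV)
  have sin: "sin (pi * c) \<noteq> 0"
    using sin_pi_gt_0[OF assms] by simp
  show "continuous_on UNIV (\<lambda>t. csc2_powr s (Complex c t))" for s
    by (rule continuous_on_csc2_powr_vertical_line[OF assms(1) sin])
  show "continuous_on UNIV (\<lambda>(s, t). - Ln (Complex c t) * csc2_powr s (Complex c t))"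
    by (rule continuous_on_csc2_powr_vertical(2)[OF assms(1) sin])
  show "((\<lambda>s. csc2_powr s (Complex c t)) has_field_derivative
          - Ln (Complex c t) * csc2_powr s (Complex c t)) (at s)" for s t
    using assms(1) by (intro has_field_derivative_csc2_powr_exponent) (simp add: Complex_eq_0)
  show "\<exists>K. \<forall>s\<in>cball s0 1. \<forall>t. norm (csc2_powr s (Complex c t)) \<le> K / (1 + t^2)" for s0
  proof -
    obtain K where K: "\<And>s t. norm s \<le> norm s0 + 1 \<Longrightarrow> norm (csc2_powr s (Complex c t)) \<le> K / (1 + t^2)"
      using norm_csc2_powr_Complex_le[OF assms] by metis
    have "norm s \<le> norm s0 + 1" if "s \<in> cball s0 1" for s
      using that norm_triangle_ineq2[of s s0] by (simp add: dist_norm norm_minus_commute)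
    then show ?thesis
      using K by blast
  qed
qed

section \<open>Contour integrals over rectangles\<close>

definition cot_powr :: "complex \<Rightarrow> complex \<Rightarrow> complex" where
  "cot_powr s z = z powr (- s) * cos (of_real pi * z) / sin (of_real pi * z)"

text \<open>The quotient-rule derivative of \<open>- cot_powr s z / pi\<close>, with \<open>S = sin (pi z)\<close>,
  \<open>C = cos (pi z)\<close>, \<open>P = z powr (-s)\<close> and \<open>Q = z powr (-s-1)\<close>.\<close>

lemma cot_derivative_identity:
  fixes P Q S C p s :: complex
  assumes "S \<noteq> 0" "p \<noteq> 0" "S^2 + C^2 = 1"
  shows "- ((((- s) * Q * C + (- S * p) * P) * S - P * C * (C * p)) / (S * S)) / p
    = P / S^2 + s / p * (Q * C / S)"
proof -
  have "- ((((- s) * Q * C + (- S * p) * P) * S - P * C * (C * p))) = s * Q * C * S + P * p * (S^2 + C^2)"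
    by (simp add: algebra_simps power2_eq_square)
  then show ?thesis
    unfolding minus_divide_left assms(3) using assms(1,2) by (simp add: field_simps power2_eq_square)
qed

lemma has_field_derivative_cot_powr:
  assumes "z \<notin> \<real>\<^sub>\<le>\<^sub>0" "sin (of_real pi * z) \<noteq> 0"
  shows "((\<lambda>z. - cot_powr s z / of_real pi) has_field_derivative
           csc2_powr s z + s / of_real pi * cot_powr (s + 1) z) (at z within A)"
proof -
  let ?S = "sin (of_real pi * z)" and ?C = "cos (of_real pi * z)"
  let ?P = "z powr (- s)" and ?Q = "z powr (- s - 1)"
  have "((\<lambda>z. z powr (- s) * cos (of_real pi * z)) has_field_derivative
          (- s) * ?Q * ?C + (- ?S * of_real pi) * ?P) (at z within A)"
    by (intro DERIV_mult has_field_derivative_at_within[OF has_field_derivative_powr[OF assms(1)]])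
       (auto intro!: derivative_eq_intros)
  moreover have "((\<lambda>z. sin (of_real pi * z)) has_field_derivative ?C * of_real pi) (at z within A)"
    by (auto intro!: derivative_eq_intros)
  ultimately have "((\<lambda>z. cot_powr s z) has_field_derivative
      (((- s) * ?Q * ?C + (- ?S * of_real pi) * ?P) * ?S - ?P * ?C * (?C * of_real pi)) / (?S * ?S))
        (at z within A)"
    unfolding cot_powr_def using assms(2) by (rule DERIV_divide)
  from DERIV_cdivide[OF DERIV_minus[OF this], of "of_real pi"]
  show ?thesis
  proof (rule DERIV_cong)
    have "- s - 1 = - (s + 1)"
      by simp
    then show "- ((((- s) * ?Q * ?C + (- ?S * of_real pi) * ?P) * ?S - ?P * ?C * (?C * of_real pi))
        / (?S * ?S)) / of_real pi = csc2_powr s z + s / of_real pi * cot_powr (s + 1) z"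
      unfolding csc2_powr_def cot_powr_def
      using cot_derivative_identity[OF assms(2) _ sin_cos_squared_add, of "of_real pi" s ?Q ?P]
      by simp
  qed
qed

lemma holomorphic_on_csc2_powr: "csc2_powr s holomorphic_on {z. 0 < Re z} - \<int>"
  unfolding csc2_powr_def[abs_def]
  by (intro holomorphic_intros) (auto simp: complex_nonpos_Reals_iff dest: sin_pi_eq_0_imp_Ints)

lemma holomorphic_on_cot_powr: "cot_powr s holomorphic_on {z. 0 < Re z} - \<int>"
  unfolding cot_powr_def[abs_def]
  by (intro holomorphic_intros) (auto simp: complex_nonpos_Reals_iff dest: sin_pi_eq_0_imp_Ints)

lemma residue_cot_powr:
  assumes "n \<ge> 1"
  shows "residue (cot_powr w) (of_nat n) = of_nat n powr (- w) / of_real pi"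
proof -
  let ?B = "ball (of_nat n) (1 / 2) :: complex set"
  have "z \<notin> \<real>\<^sub>\<le>\<^sub>0" if "z \<in> ?B" for z
  proof -
    have "\<bar>Re z - real n\<bar> < 1 / 2"
      using that abs_Re_le_cmod[of "z - of_nat n"] by (simp add: dist_norm norm_minus_commute)
    then show ?thesis
      using assms by (auto simp: complex_nonpos_Reals_iff)
  qed
  then have "residue (cot_powr w) (of_nat n)
      = of_nat n powr (- w) * cos (of_real pi * of_nat n) / (cos (of_real pi * of_nat n) * of_real pi)"
    unfolding cot_powr_def[abs_def]
    using assms
    by (intro residue_simple_pole_deriv[where s = ?B] holomorphic_intros)
       (auto intro!: derivative_eq_intros simp: sin_pi_of_nat cos_pi_of_nat)
  also have "\<dots> = of_nat n powr (- w) / of_real pi"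
    by (simp add: cos_pi_of_nat)
  finally show ?thesis .
qed

lemma has_contour_integral_vertical:
  fixes f :: "complex \<Rightarrow> complex"
  assumes "a < b"
  shows "(f has_contour_integral I) (linepath (Complex x a) (Complex x b)) \<longleftrightarrow>
         ((\<lambda>t. f (Complex x t) * \<i>) has_integral I) {a..b}"
proof -
  define A B where "A = Complex x a" and "B = Complex x b"
  have BA: "B - A = \<i> * of_real (b - a)"
    unfolding A_def B_def by (simp add: complex_eq_iff)
  have lp: "linepath A B u = Complex x ((b - a) * u + a)" for u
    unfolding linepath_def A_def B_def by (simp add: complex_eq_iff scaleR_conv_of_real algebra_simps)
  have "((\<lambda>t. f (Complex x t) * \<i>) has_integral I) (cbox a b) \<longleftrightarrow>
          ((\<lambda>u. f (Complex x ((b - a) *\<^sub>R u + a)) * \<i>) has_integral I /\<^sub>R (b - a)) (cbox ((a - a) /\<^sub>R (b - a)) ((b - a) /\<^sub>R (b - a)))"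
    using has_integral_affinity_iff[of "b - a" "\<lambda>t. f (Complex x t) * \<i>" a I a b] assms by simp
  also have "cbox ((a - a) /\<^sub>R (b - a)) ((b - a) /\<^sub>R (b - a)) = {0..1::real}"
    using assms by simp
  also have "(\<lambda>u. f (Complex x ((b - a) *\<^sub>R u + a)) * \<i>) =
               (\<lambda>u. inverse (b - a) *\<^sub>R (f (linepath A B u) * (B - A)))"
    using assms by (auto simp: fun_eq_iff lp BA scaleR_conv_of_real field_simps)
  also have "((\<lambda>u. inverse (b - a) *\<^sub>R (f (linepath A B u) * (B - A))) has_integral I /\<^sub>R (b - a)) {0..1} \<longleftrightarrow>
               ((\<lambda>u. f (linepath A B u) * (B - A)) has_integral I) {0..1}"
    by (rule has_integral_cmul_iff) (use assms in simp)
  also have "\<dots> \<longleftrightarrow> (f has_contour_integral I) (linepath A B)"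
    by (rule has_contour_integral_linepath[symmetric])
  finally show ?thesis
    unfolding A_def B_def by simp
qed

lemma contour_integral_vertical:
  fixes f :: "complex \<Rightarrow> complex"
  assumes "a < b" "continuous_on (closed_segment (Complex x a) (Complex x b)) f"
  shows "contour_integral (linepath (Complex x a) (Complex x b)) f = \<i> * integral {a..b} (\<lambda>t. f (Complex x t))"
proof -
  have "f contour_integrable_on linepath (Complex x a) (Complex x b)"
    by (rule contour_integrable_continuous_linepath[OF assms(2)])
  then obtain I where I: "(f has_contour_integral I) (linepath (Complex x a) (Complex x b))"
    by (auto simp: contour_integrable_on_def)
  then have "((\<lambda>t. f (Complex x t) * \<i>) has_integral I) {a..b}"
    using has_contour_integral_vertical[OF assms(1)] by blast
  then have "((\<lambda>t. (f (Complex x t) * \<i>) * (- \<i>)) has_integral I * (- \<i>)) {a..b}"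
    by (rule has_integral_mult_left)
  then have "((\<lambda>t. f (Complex x t)) has_integral I * (- \<i>)) {a..b}"
    by (simp add: mult.assoc)
  then have "integral {a..b} (\<lambda>t. f (Complex x t)) = I * (- \<i>)"
    by (rule integral_unique)
  then show ?thesis
    using contour_integral_unique[OF I] by (simp add: algebra_simps complex_i_mult_minus)
qed

lemma path_image_rectpath_avoids_Ints:
  fixes c X T :: real
  assumes "c \<notin> \<int>" "X \<notin> \<int>" "c \<le> X" "0 < T"
    and "z \<in> path_image (rectpath (Complex c (- T)) (Complex X T))"
  shows "c \<le> Re z" and "z \<notin> \<int>"
proof -
  have image: "path_image (rectpath (Complex c (- T)) (Complex X T))
      = cbox (Complex c (- T)) (Complex X T) - box (Complex c (- T)) (Complex X T)"
    using assms by (intro path_image_rectpath_cbox_minus_box) auto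
  show "c \<le> Re z"
    using assms(5) by (auto simp: image in_cbox_complex_iff)
  show "z \<notin> \<int>"
  proof
    assume "z \<in> \<int>"
    then obtain m :: int where "z = of_int m"
      by (auto elim: Ints_cases)
    then have "of_int m = c \<or> of_int m = X"
      using assms(4,5) by (auto simp: image in_cbox_complex_iff in_box_complex_iff)
    then show False
      using assms(1,2) by auto
  qed
qed

lemma path_image_rectpath_subset_Diff_Ints:
  fixes c X T :: real
  assumes "0 < c" "c \<notin> \<int>" "X \<notin> \<int>" "c \<le> X" "0 < T"
  shows "path_image (rectpath (Complex c (- T)) (Complex X T)) \<subseteq> {z. 0 < Re z} - \<int>"
  using path_image_rectpath_avoids_Ints[OF assms(2-5)] assms(1) by fastforce

lemma strip_Diff_nat_subset_Diff_Ints: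
  assumes "0 < a" "a < 1"
  shows "{z. a < Re z} \<inter> {z. Re z < real N + 1} - of_nat ` {1..N} \<subseteq> {z. 0 < Re z} - \<int>"
proof
  fix z assume z: "z \<in> {z. a < Re z} \<inter> {z. Re z < real N + 1} - of_nat ` {1..N}"
  have "z \<notin> \<int>"
  proof
    assume "z \<in> \<int>"
    then obtain m :: int where m: "z = of_int m"
      by (auto elim: Ints_cases)
    then have "1 \<le> m" "m \<le> int N"
      using z assms by auto
    then have "z \<in> of_nat ` {1..N}"
      unfolding m by (intro image_eqI[of _ _ "nat m"]) auto
    then show False
      using z by blast
  qed
  then show "z \<in> {z. 0 < Re z} - \<int>"
    using z assms(1) by auto
qed

lemma contour_integral_rectpath_cot_powr:
  fixes c T :: real and N :: nat
  assumes "0 < c" "c < 1" "0 < T" "1 \<le> N"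
  shows "contour_integral (rectpath (Complex c (- T)) (Complex (real N + 1 / 2) T)) (cot_powr w)
    = 2 * \<i> * (\<Sum>n=1..N. of_nat n powr (- w))"
proof -
  let ?R = "rectpath (Complex c (- T)) (Complex (real N + 1 / 2) T)"
  define S where "S = {z. c / 2 < Re z} \<inter> {z. Re z < real N + 1}"
  define pts where "pts = (of_nat :: nat \<Rightarrow> complex) ` {1..N}"
  have "open S" and "connected S"
    unfolding S_def
    by (intro open_Int open_halfspace_Re_gt open_halfspace_Re_lt convex_connected convex_Int
        convex_halfspace_Re_gt convex_halfspace_Re_lt)+
  moreover have "finite pts"
    by (simp add: pts_def)
  moreover have "cot_powr w holomorphic_on S - pts"
    unfolding S_def pts_def using assms(1,2)
    by (intro holomorphic_on_subset[OF holomorphic_on_cot_powr] strip_Diff_nat_subset_Diff_Ints) simp_all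
  moreover have "path_image ?R \<subseteq> S - pts"
  proof
    fix z assume z: "z \<in> path_image ?R"
    have "z \<in> cbox (Complex c (- T)) (Complex (real N + 1 / 2) T)"
      using z path_image_rectpath_subset_cbox[of "Complex c (- T)" "Complex (real N + 1 / 2) T"] assms
      by auto
    then have "z \<in> S"
      using assms by (auto simp: S_def in_cbox_complex_iff)
    moreover have "z \<notin> pts"
      using path_image_rectpath_avoids_Ints(2)[OF between_0_1_notin_Ints[OF assms(1,2)]
          half_integer_notin_Ints _ assms(3) z] assms
      by (auto simp: pts_def)
    ultimately show "z \<in> S - pts"
      by blast
  qed
  moreover have "winding_number ?R z = 0" if "z \<notin> S" for z
    using that assms
    by (intro winding_number_rectpath_outside) (auto simp: S_def in_cbox_complex_iff)
  ultimately have "contour_integral ?R (cot_powr w)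
      = 2 * pi * \<i> * (\<Sum>p\<in>pts. winding_number ?R p * residue (cot_powr w) p)"
    by (intro Residue_theorem) auto
  also have "(\<Sum>p\<in>pts. winding_number ?R p * residue (cot_powr w) p)
      = (\<Sum>n=1..N. winding_number ?R (of_nat n) * residue (cot_powr w) (of_nat n))"
    by (simp add: pts_def sum.reindex inj_on_def)
  also have "\<dots> = (\<Sum>n=1..N. of_nat n powr (- w) / of_real pi)"
  proof (rule sum.cong[OF refl])
    fix n assume "n \<in> {1..N}"
    then have "winding_number ?R (of_nat n) = 1"
      using assms by (intro winding_number_rectpath) (auto simp: in_box_complex_iff)
    then show "winding_number ?R (of_nat n) * residue (cot_powr w) (of_nat n) = of_nat n powr (- w) / of_real pi"
      using \<open>n \<in> {1..N}\<close> by (simp add: residue_cot_powr)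
  qed
  finally show ?thesis
    by (simp add: sum_divide_distrib[symmetric])
qed

lemma contour_integral_rectpath_csc2_powr:
  fixes c T :: real and N :: nat
  assumes "0 < c" "c < 1" "0 < T" "1 \<le> N"
  shows "contour_integral (rectpath (Complex c (- T)) (Complex (real N + 1 / 2) T)) (csc2_powr s)
    = - (2 * \<i> * s / of_real pi) * (\<Sum>n=1..N. of_nat n powr (- (s + 1)))"
proof -
  let ?R = "rectpath (Complex c (- T)) (Complex (real N + 1 / 2) T)"
  define \<Omega> where "\<Omega> = {z. 0 < Re z} - \<int>"
  have "open \<Omega>"
    unfolding \<Omega>_def by (intro open_Diff open_halfspace_Re_gt closed_Ints)
  have "c \<le> real N + 1 / 2"
    using assms by simp
  then have "path_image ?R \<subseteq> \<Omega>"
    unfolding \<Omega>_def using assms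
    by (intro path_image_rectpath_subset_Diff_Ints between_0_1_notin_Ints half_integer_notin_Ints)
  then have integrable: "csc2_powr s contour_integrable_on ?R" "cot_powr (s + 1) contour_integrable_on ?R"
    using \<open>open \<Omega>\<close> holomorphic_on_csc2_powr holomorphic_on_cot_powr
    by (auto simp: \<Omega>_def intro: contour_integrable_holomorphic_simple)
  have "((\<lambda>z. csc2_powr s z + s / of_real pi * cot_powr (s + 1) z) has_contour_integral 0) ?R"
    using \<open>path_image ?R \<subseteq> \<Omega>\<close>
    by (intro Cauchy_theorem_primitive[of \<Omega> "\<lambda>z. - cot_powr s z / of_real pi"] has_field_derivative_cot_powr)
       (auto simp: \<Omega>_def complex_nonpos_Reals_iff dest: sin_pi_eq_0_imp_Ints)
  moreover have "((\<lambda>z. csc2_powr s z + s / of_real pi * cot_powr (s + 1) z) has_contour_integral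
      contour_integral ?R (csc2_powr s) + s / of_real pi * contour_integral ?R (cot_powr (s + 1))) ?R"
    using integrable by (intro has_contour_integral_add has_contour_integral_lmul has_contour_integral_integral)
  ultimately have "contour_integral ?R (csc2_powr s) = - (s / of_real pi) * contour_integral ?R (cot_powr (s + 1))"
    using has_contour_integral_unique by (simp add: eq_neg_iff_add_eq_0)
  then show ?thesis
    using contour_integral_rectpath_cot_powr[OF assms] by simp
qed

lemma contour_integral_rectpath_Complex:
  fixes a b T :: real
  assumes "a \<le> b" "0 < T" and cont: "continuous_on (path_image (rectpath (Complex a (- T)) (Complex b T))) f"
  shows "contour_integral (rectpath (Complex a (- T)) (Complex b T)) f
    = contour_integral (linepath (Complex a (- T)) (Complex b (- T))) f
      + \<i> * integral {-T..T} (\<lambda>t. f (Complex b t))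
      + contour_integral (linepath (Complex b T) (Complex a T)) f
      - \<i> * integral {-T..T} (\<lambda>t. f (Complex a t))"
proof -
  define a1 a2 a3 a4 where "a1 = Complex a (- T)" and "a2 = Complex b (- T)"
    and "a3 = Complex b T" and "a4 = Complex a T"
  have R: "rectpath a1 a3 = linepath a1 a2 +++ linepath a2 a3 +++ linepath a3 a4 +++ linepath a4 a1"
    by (simp add: rectpath_def Let_def a1_def a2_def a3_def a4_def)
  have image: "path_image (rectpath a1 a3)
      = closed_segment a1 a2 \<union> closed_segment a2 a3 \<union> closed_segment a3 a4 \<union> closed_segment a4 a1"
    unfolding R by (simp add: path_image_join Un_assoc)
  have cont_side: "continuous_on (closed_segment u v) f"
    if "closed_segment u v \<subseteq> path_image (rectpath a1 a3)" for u v
    using cont that continuous_on_subset unfolding a1_def a3_def by blast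
  have right: "continuous_on (closed_segment a2 a3) f" and left: "continuous_on (closed_segment a1 a4) f"
    by (auto intro!: cont_side simp: image closed_segment_commute)
  have "f contour_integrable_on linepath u v"
    if "closed_segment u v \<subseteq> path_image (rectpath a1 a3)" for u v
    by (rule contour_integrable_continuous_linepath[OF cont_side[OF that]])
  then have "f contour_integrable_on linepath a1 a2" "f contour_integrable_on linepath a2 a3"
    "f contour_integrable_on linepath a3 a4" "f contour_integrable_on linepath a4 a1"
    unfolding image by blast+
  then have "contour_integral (rectpath a1 a3) f = contour_integral (linepath a1 a2) f
      + contour_integral (linepath a2 a3) f + contour_integral (linepath a3 a4) f
      + contour_integral (linepath a4 a1) f"
    unfolding R by simp
  also have "contour_integral (linepath a2 a3) f = \<i> * integral {-T..T} (\<lambda>t. f (Complex b t))"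
    using assms(2) right unfolding a2_def a3_def by (intro contour_integral_vertical) auto
  also have "contour_integral (linepath a4 a1) f = - (\<i> * integral {-T..T} (\<lambda>t. f (Complex a t)))"
  proof -
    have "contour_integral (linepath a1 a4) f = \<i> * integral {-T..T} (\<lambda>t. f (Complex a t))"
      using assms(2) left unfolding a1_def a4_def by (intro contour_integral_vertical) auto
    then show ?thesis
      using contour_integral_reversepath[of "linepath a1 a4" f] by simp
  qed
  finally show ?thesis
    by (simp add: a1_def a2_def a3_def a4_def)
qed

section \<open>The formula for \<open>Re s > 0\<close>\<close>

lemma norm_csc2_powr_le_horizontal:
  assumes "0 < c" "c \<le> Re z" "0 < Re s" "1 \<le> \<bar>Im z\<bar>"
  shows "norm (csc2_powr s z) \<le> 4 * (c powr (- Re s) * exp (\<bar>Im s\<bar> * pi)) / (exp (2 * pi * \<bar>Im z\<bar>) - 2)"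
proof -
  let ?E = "exp (2 * pi * \<bar>Im z\<bar>) - 2"
  have "2 * pi \<le> 2 * pi * \<bar>Im z\<bar>"
    using assms(4) by simp
  then have "1 + 2 * pi \<le> exp (2 * pi * \<bar>Im z\<bar>)"
    using exp_ge_add_one_self[of "2 * pi * \<bar>Im z\<bar>"] by linarith
  then have "0 < ?E"
    using pi_gt3 by linarith
  have "of_real pi * z = Complex (pi * Re z) (pi * Im z)"
    by (simp add: complex_eq_iff)
  then have "?E / 4 \<le> norm (sin (of_real pi * z))^2"
    using norm_sin_Complex_ge_sinh[of "pi * Im z" "pi * Re z"] by (simp add: abs_mult mult.assoc)
  then have "norm (z powr (- s)) / norm (sin (of_real pi * z))^2
      \<le> c powr (- Re s) * exp (\<bar>Im s\<bar> * pi) / (?E / 4)"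
    using norm_powr_neg_le_Re[OF assms(1-3)] \<open>0 < ?E\<close> by (intro frac_le) auto
  then show ?thesis
    by (simp add: csc2_powr_def norm_divide norm_power field_simps)
qed

lemma norm_contour_integral_horizontal_le:
  fixes c u1 u2 y :: real
  assumes "0 < c" "c \<le> u1" "c \<le> u2" "0 < Re s" "1 \<le> \<bar>y\<bar>"
  shows "norm (contour_integral (linepath (Complex u1 y) (Complex u2 y)) (csc2_powr s))
    \<le> 4 * (c powr (- Re s) * exp (\<bar>Im s\<bar> * pi)) / (exp (2 * pi * \<bar>y\<bar>) - 2) * \<bar>u2 - u1\<bar>"
proof -
  let ?segment = "closed_segment (Complex u1 y) (Complex u2 y)"
  have on_segment: "c \<le> Re z" "Im z = y" if "z \<in> ?segment" for z
    using that assms(2,3) by (auto simp: closed_segment_same_Im closed_segment_eq_real_ivl split: if_splits)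
  have "?segment \<subseteq> {z. 0 < Re z} - \<int>"
  proof
    fix z assume "z \<in> ?segment"
    then have "0 < Re z" "Im z \<noteq> 0"
      using on_segment assms(1,5) by force+
    then show "z \<in> {z. 0 < Re z} - \<int>"
      by (auto elim: Ints_cases)
  qed
  then have "continuous_on ?segment (csc2_powr s)"
    by (intro holomorphic_on_imp_continuous_on holomorphic_on_subset[OF holomorphic_on_csc2_powr])
  let ?K = "4 * (c powr (- Re s) * exp (\<bar>Im s\<bar> * pi)) / (exp (2 * pi * \<bar>y\<bar>) - 2)"
  have pointwise: "norm (csc2_powr s z) \<le> ?K" if "z \<in> ?segment" for z
    using norm_csc2_powr_le_horizontal[OF assms(1) on_segment(1)[OF that] assms(4)]
      on_segment(2)[OF that] assms(5)
    by simp
  then have "0 \<le> ?K"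
    by (meson ends_in_segment(1) norm_ge_zero order_trans)
  then have "norm (contour_integral (linepath (Complex u1 y) (Complex u2 y)) (csc2_powr s))
      \<le> ?K * norm (Complex u2 y - Complex u1 y)"
    using pointwise by (intro contour_integral_bound_linepath contour_integrable_continuous_linepath
        \<open>continuous_on ?segment (csc2_powr s)\<close>)
  also have "norm (Complex u2 y - Complex u1 y) = \<bar>u2 - u1\<bar>"
    by (simp add: cmod_def)
  finally show ?thesis .
qed

lemma norm_integral_half_integer_le:
  fixes N :: nat and T :: real
  assumes "0 < Re s" "0 \<le> T"
  defines "X \<equiv> real N + 1 / 2"
  shows "norm (integral {-T..T} (\<lambda>t. csc2_powr s (Complex X t)))
    \<le> 4 * pi * (X powr (- Re s) * exp (\<bar>Im s\<bar> * pi))"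
proof -
  let ?B = "X powr (- Re s) * exp (\<bar>Im s\<bar> * pi)"
  have "0 < X" "(sin (pi * X))^2 = 1"
    using sin_pi_half_integer_squared[of N] by (auto simp: X_def)
  have bound: "norm (csc2_powr s (Complex X t)) \<le> 4 * ?B * (1 / (1 + t^2))" for t
  proof -
    have "norm (csc2_powr s (Complex X t)) = norm (Complex X t powr (- s)) / norm (sin (of_real pi * Complex X t))^2"
      by (simp add: csc2_powr_def norm_divide norm_power)
    also have "\<dots> \<le> ?B / (exp (2 * pi * \<bar>t\<bar>) / 4)"
      using norm_sin_pi_Complex_ge[of X t] \<open>(sin (pi * X))^2 = 1\<close> \<open>0 < X\<close> assms(1)
      by (intro frac_le norm_powr_neg_le_Re) auto
    also have "\<dots> = 4 * ?B * exp (- (2 * pi * \<bar>t\<bar>))"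
      by (simp add: exp_minus field_simps)
    also have "\<dots> \<le> 4 * ?B * (1 / (1 + t^2))"
    proof (rule mult_left_mono)
      have "exp (- (2 * pi * \<bar>t\<bar>)) \<le> exp (- pi * \<bar>t\<bar>)"
        by simp
      then show "exp (- (2 * pi * \<bar>t\<bar>)) \<le> 1 / (1 + t^2)"
        using exp_neg_pi_abs_le[of t] by linarith
    qed simp
    finally show ?thesis .
  qed
  have "norm (integral {-T..T} (\<lambda>t. csc2_powr s (Complex X t))) \<le> integral {-T..T} (\<lambda>t. 4 * ?B * (1 / (1 + t^2)))"
  proof (rule integral_norm_bound_integral[OF _ _ bound])
    show "(\<lambda>t. csc2_powr s (Complex X t)) integrable_on {-T..T}"
      using \<open>0 < X\<close> \<open>(sin (pi * X))^2 = 1\<close>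
      by (intro integrable_continuous_real continuous_on_csc2_powr_vertical_line) auto
    show "(\<lambda>t. 4 * ?B * (1 / (1 + t^2))) integrable_on {-T..T}"
      using has_integral_mult_right[OF has_integral_inverse_1_plus_square_symmetric[OF assms(2)]]
      by blast
  qed
  also have "\<dots> = 4 * ?B * (2 * arctan T)"
    using has_integral_mult_right[OF has_integral_inverse_1_plus_square_symmetric[OF assms(2)], of "4 * ?B"]
    by (simp add: integral_unique)
  also have "\<dots> \<le> 4 * ?B * pi"
    using arctan_bounded[of T] by (intro mult_left_mono) auto
  finally show ?thesis
    by (simp add: mult_ac)
qed

lemma summable_inverse_Suc_powr:
  assumes "1 < Re w"
  shows "summable (\<lambda>n. 1 / of_nat (Suc n) powr w :: complex)"
proof -
  have "summable (\<lambda>n. exp (of_real (ln (of_nat n)) * (- w)))"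
    using assms by (intro summable_complex_powr_iff) simp
  then have "summable (\<lambda>n. exp (of_real (ln (of_nat (Suc n))) * (- w)))"
    by (subst summable_Suc_iff)
  moreover have "exp (of_real (ln (of_nat (Suc n))) * (- w)) = 1 / of_nat (Suc n) powr w" for n
  proof -
    have "Ln (of_nat (Suc n)) = of_real (ln (of_nat (Suc n)))"
      by (rule Ln_of_nat) simp
    then show ?thesis
      by (simp add: powr_def exp_minus inverse_eq_divide mult.commute del: of_nat_Suc)
  qed
  ultimately show ?thesis
    by simp
qed

lemma tendsto_sum_powr_suminf:
  assumes "1 < Re w"
  shows "(\<lambda>N. \<Sum>n=1..N. of_nat n powr (- w)) \<longlonglongrightarrow> (\<Sum>n. 1 / of_nat (Suc n) powr w)"
proof -
  have "(\<Sum>n=1..N. of_nat n powr (- w)) = (\<Sum>n<N. 1 / of_nat (Suc n) powr w)" for N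
    by (simp add: sum.atLeast1_atMost_eq powr_minus divide_inverse del: of_nat_Suc)
  then show ?thesis
    using summable_LIMSEQ[OF summable_inverse_Suc_powr[OF assms]] by simp
qed

definition three_sides_integral :: "real \<Rightarrow> complex \<Rightarrow> nat \<Rightarrow> complex" where
  "three_sides_integral c s N =
     contour_integral (linepath (Complex c (- real N)) (Complex (real N + 1 / 2) (- real N))) (csc2_powr s)
     + \<i> * integral {- real N..real N} (\<lambda>t. csc2_powr s (Complex (real N + 1 / 2) t))
     + contour_integral (linepath (Complex (real N + 1 / 2) (real N)) (Complex c (real N))) (csc2_powr s)"

lemma truncated_vertical_integral_eq:
  assumes "0 < c" "c < 1" "1 \<le> N"
  shows "\<i> * integral {- real N..real N} (\<lambda>t. csc2_powr s (Complex c t))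
    = three_sides_integral c s N + 2 * \<i> * s / of_real pi * (\<Sum>n=1..N. of_nat n powr (- (s + 1)))"
proof -
  let ?X = "real N + 1 / 2"
  have "c \<le> ?X" "0 < real N"
    using assms by simp_all
  then have "continuous_on (path_image (rectpath (Complex c (- real N)) (Complex ?X (real N)))) (csc2_powr s)"
    using path_image_rectpath_subset_Diff_Ints[OF assms(1) between_0_1_notin_Ints[OF assms(1,2)]
        half_integer_notin_Ints[of N]]
    by (intro holomorphic_on_imp_continuous_on holomorphic_on_subset[OF holomorphic_on_csc2_powr]) simp
  from contour_integral_rectpath_Complex[OF \<open>c \<le> ?X\<close> \<open>0 < real N\<close> this]
  show ?thesis
    using contour_integral_rectpath_csc2_powr[OF assms(1,2) \<open>0 < real N\<close> assms(3), of s]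
    by (simp add: three_sides_integral_def algebra_simps)
qed

lemma norm_three_sides_integral_le:
  assumes "0 < c" "c < 1" "0 < Re s" "1 \<le> N"
  shows "norm (three_sides_integral c s N)
    \<le> 2 * (4 * (c powr (- Re s) * exp (\<bar>Im s\<bar> * pi)) / (exp (2 * pi * real N) - 2) * (real N + 1 / 2 - c))
      + 4 * pi * ((real N + 1 / 2) powr (- Re s) * exp (\<bar>Im s\<bar> * pi))"
proof -
  let ?X = "real N + 1 / 2" and ?B = "c powr (- Re s) * exp (\<bar>Im s\<bar> * pi)"
  let ?bottom = "contour_integral (linepath (Complex c (- real N)) (Complex ?X (- real N))) (csc2_powr s)"
  let ?right = "\<i> * integral {- real N..real N} (\<lambda>t. csc2_powr s (Complex ?X t))"
  let ?top = "contour_integral (linepath (Complex ?X (real N)) (Complex c (real N))) (csc2_powr s)"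
  let ?K = "4 * ?B / (exp (2 * pi * real N) - 2) * (?X - c)"
  have "c \<le> ?X" "1 \<le> \<bar>- real N\<bar>" "1 \<le> \<bar>real N\<bar>"
    using assms by simp_all
  then have "norm ?bottom \<le> ?K" and "norm ?top \<le> ?K"
    using norm_contour_integral_horizontal_le[OF assms(1) order.refl _ assms(3), of ?X "- real N"]
      norm_contour_integral_horizontal_le[OF assms(1) _ order.refl assms(3), of ?X "real N"]
    by simp_all
  moreover have "norm ?right \<le> 4 * pi * (?X powr (- Re s) * exp (\<bar>Im s\<bar> * pi))"
    using norm_integral_half_integer_le[OF assms(3), of "real N" N] by (simp add: norm_mult)
  ultimately have "norm ?bottom + norm ?right + norm ?top \<le> ?K + 4 * pi * (?X powr (- Re s) * exp (\<bar>Im s\<bar> * pi)) + ?K"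
    by (intro add_mono)
  moreover have "norm (three_sides_integral c s N) \<le> norm ?bottom + norm ?right + norm ?top"
    unfolding three_sides_integral_def
    by (rule order.trans[OF norm_triangle_ineq add_right_mono[OF norm_triangle_ineq]])
  ultimately show ?thesis
    by (simp add: algebra_simps)
qed

lemma three_sides_integral_tendsto_0:
  assumes "0 < c" "c < 1" "0 < Re s"
  shows "three_sides_integral c s \<longlonglongrightarrow> 0"
proof (rule Lim_null_comparison)
  let ?B = "c powr (- Re s) * exp (\<bar>Im s\<bar> * pi)"
  show "\<forall>\<^sub>F N in sequentially. norm (three_sides_integral c s N)
      \<le> 2 * (4 * ?B / (exp (2 * pi * real N) - 2) * (real N + 1 / 2 - c))
        + 4 * pi * ((real N + 1 / 2) powr (- Re s) * exp (\<bar>Im s\<bar> * pi))"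
    using norm_three_sides_integral_le[OF assms] by (auto simp: eventually_sequentially)
  have "(\<lambda>N. 4 * ?B / (exp (2 * pi * real N) - 2) * (real N + 1 / 2 - c)) \<longlonglongrightarrow> 0"
    by real_asymp
  moreover have "(\<lambda>N. (real N + 1 / 2) powr (- Re s)) \<longlonglongrightarrow> 0"
    using assms(3) by real_asymp
  ultimately have "(\<lambda>N. 2 * (4 * ?B / (exp (2 * pi * real N) - 2) * (real N + 1 / 2 - c))
      + 4 * pi * ((real N + 1 / 2) powr (- Re s) * exp (\<bar>Im s\<bar> * pi)))
      \<longlonglongrightarrow> 2 * 0 + 4 * pi * (0 * exp (\<bar>Im s\<bar> * pi))"
    by (intro tendsto_intros)
  then show "(\<lambda>N. 2 * (4 * ?B / (exp (2 * pi * real N) - 2) * (real N + 1 / 2 - c))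
      + 4 * pi * ((real N + 1 / 2) powr (- Re s) * exp (\<bar>Im s\<bar> * pi))) \<longlonglongrightarrow> 0"
    by simp
qed

lemma vertical_integral_eq_series:
  assumes "0 < c" "c < 1" "0 < Re s"
  shows "vertical_integral c s = 2 * s / of_real pi * (\<Sum>n. 1 / of_nat (Suc n) powr (s + 1))"
proof -
  let ?Z = "\<Sum>n. 1 / of_nat (Suc n) powr (s + 1)"
  have "(\<lambda>N. \<Sum>n=1..N. of_nat n powr (- (s + 1))) \<longlonglongrightarrow> ?Z"
    by (rule tendsto_sum_powr_suminf) (use assms(3) in simp)
  with three_sides_integral_tendsto_0[OF assms]
  have "(\<lambda>N. three_sides_integral c s N + 2 * \<i> * s / of_real pi * (\<Sum>n=1..N. of_nat n powr (- (s + 1))))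
      \<longlonglongrightarrow> 0 + 2 * \<i> * s / of_real pi * ?Z"
    by (rule tendsto_add[OF _ tendsto_mult_left])
  then have "(\<lambda>N. three_sides_integral c s N + 2 * \<i> * s / of_real pi * (\<Sum>n=1..N. of_nat n powr (- (s + 1))))
      \<longlonglongrightarrow> 2 * \<i> * s / of_real pi * ?Z"
    by (simp only: add_0_left)
  moreover have "\<forall>\<^sub>F N in sequentially.
      three_sides_integral c s N + 2 * \<i> * s / of_real pi * (\<Sum>n=1..N. of_nat n powr (- (s + 1)))
        = \<i> * integral {- real N..real N} (\<lambda>t. csc2_powr s (Complex c t))"
  proof (rule eventually_sequentiallyI)
    fix N :: nat
    assume "1 \<le> N"
    show "three_sides_integral c s N + 2 * \<i> * s / of_real pi * (\<Sum>n=1..N. of_nat n powr (- (s + 1)))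
        = \<i> * integral {- real N..real N} (\<lambda>t. csc2_powr s (Complex c t))"
      by (rule truncated_vertical_integral_eq[OF assms(1,2) \<open>1 \<le> N\<close>, symmetric])
  qed
  ultimately have "(\<lambda>N. \<i> * integral {- real N..real N} (\<lambda>t. csc2_powr s (Complex c t)))
      \<longlonglongrightarrow> 2 * \<i> * s / of_real pi * ?Z"
    by (rule Lim_transform_eventually)
  moreover have "(\<lambda>N. \<i> * integral {- real N..real N} (\<lambda>t. csc2_powr s (Complex c t)))
      \<longlonglongrightarrow> \<i> * vertical_integral c s"
    by (intro tendsto_mult_left filterlim_compose[OF vertical_integral_improper(2)[OF assms(1,2)]
        filterlim_real_sequentially])
  ultimately have "2 * \<i> * s / of_real pi * ?Z = \<i> * vertical_integral c s"
    by (rule LIMSEQ_unique)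
  then show ?thesis
    by (simp add: field_simps)
qed

section \<open>Analytic continuation\<close>

lemma zeta_eqI:
  assumes "f holomorphic_on - {1}"
    and "\<And>s. 1 < Re s \<Longrightarrow> f s = (\<Sum>n. 1 / of_nat (Suc n) powr s)"
    and "f 1 = 0"
  shows "zeta = f"
  unfolding zeta_def
proof (rule the_equality)
  show "f holomorphic_on - {1} \<and> (\<forall>s. 1 < Re s \<longrightarrow> f s = (\<Sum>n. 1 / of_nat (Suc n) powr s)) \<and> f 1 = 0"
    using assms by blast
  fix g
  assume g: "g holomorphic_on - {1} \<and> (\<forall>s. 1 < Re s \<longrightarrow> g s = (\<Sum>n. 1 / of_nat (Suc n) powr s)) \<and> g 1 = 0"
  show "g = f"
  proof
    fix w :: complex
    show "g w = f w"
    proof (cases "w = 1")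
      case True
      then show ?thesis
        using g assms(3) by simp
    next
      case False
      show ?thesis
      proof (rule analytic_continuation_open[where s = "{s. 1 < Re s}" and s' = "- {1}" and f = g and g = f])
        show "connected (- {1 :: complex})"
          by (rule connected_punctured_universe) simp
        show "{s :: complex. 1 < Re s} \<noteq> {}"
          by (auto intro!: exI[of _ 2])
      qed (use g assms False in \<open>auto simp: open_halfspace_Re_gt\<close>)
    qed
  qed
qed

lemma zeta_eq_vertical_integral:
  assumes "0 < c" "c < 1" "s \<noteq> 0"
  shows "zeta (s + 1) = of_real pi / (2 * s) * vertical_integral c s"
proof -
  define G where "G w = (if w = 1 then 0 else of_real pi / (2 * (w - 1)) * vertical_integral c (w - 1))" for w
  have "(vertical_integral c \<circ> (\<lambda>w. w - 1)) holomorphic_on - {1}"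
    using holomorphic_vertical_integral[OF assms(1,2)]
    by (intro holomorphic_on_compose holomorphic_intros) (auto elim: holomorphic_on_subset)
  then have "(\<lambda>w. of_real pi / (2 * (w - 1)) * vertical_integral c (w - 1)) holomorphic_on - {1}"
    by (intro holomorphic_intros) (auto simp: o_def)
  then have "G holomorphic_on - {1}"
    by (rule holomorphic_transform) (simp add: G_def)
  moreover have "G w = (\<Sum>n. 1 / of_nat (Suc n) powr w)" if "1 < Re w" for w
  proof -
    have "w \<noteq> 1" "0 < Re (w - 1)"
      using that by auto
    then show ?thesis
      using vertical_integral_eq_series[OF assms(1,2) \<open>0 < Re (w - 1)\<close>] by (simp add: G_def)
  qed
  ultimately have "zeta = G"
    by (intro zeta_eqI) (simp_all add: G_def)
  then have "zeta (s + 1) = G (s + 1)"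
    by simp
  then show ?thesis
    using assms(3) by (simp add: G_def)
qed

theorem mainTheorem3:
  fixes c :: real and s :: complex
  assumes "0 < c" and "c < 1" and "s \<noteq> 0"
  shows "(\<lambda>t::real. (Complex c t) powr (- s) / (sin (of_real pi * Complex c t))\<^sup>2) integrable_on UNIV
    \<and> zeta (s + 1) = of_real pi / (2 * s) *
        integral UNIV (\<lambda>t::real. (Complex c t) powr (- s) / (sin (of_real pi * Complex c t))\<^sup>2)"
proof -
  have integrand: "(\<lambda>t. Complex c t powr (- s) / (sin (of_real pi * Complex c t))\<^sup>2) = (\<lambda>t. csc2_powr s (Complex c t))"
    by (simp add: csc2_powr_def)
  show ?thesis
    unfolding integrand
    using vertical_integral_improper(1)[OF assms(1,2)] zeta_eq_vertical_integral[OF assms]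
    by (simp add: vertical_integral_def)
qed

end
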